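(* For a generic twisted $(N,1)$ spiral ($N\ge5$, $N\not\equiv1\pmod3$) with invariants $a_k,b_k,c_k$ from its normalized lift: (i) $c_N=\det\rho_{N+1}$ and $c_Nc_{-1}=A_0A_1$; consequently $A_0=\dfrac{a_{N-1}c_N}{A_1a_0}$ and $b_{-1}=\dfrac1{a_0}\Big(\dfrac{a_{N-1}c_N}{A_1a_0}-1\Big)$; (ii) $c_{N+1}(c_N+b_Na_{N-2})=c_N$ and $c_N+b_Na_{N-2}=\dfrac{c_N^2}{A_1A_2}$; consequently $b_N=\dfrac{c_N}{a_{N-2}}\Big(\dfrac{c_N}{A_1A_2}-1\Big)$ and $c_{N+1}=\dfrac{A_1A_2}{c_N}$; (iii) $a_{-1}=\dfrac{c_{N+1}a_{N-1}a_{N-2}}{c_Na_0}(1+a_1b_0)=\dfrac{a_{N-1}^2a_{N-2}A_1A_2}{a_0^2c_NA_0}$.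
   Context: Points lie in $\mathbb{RP}^2$; $M\in PSL(3,\mathbb R)$ is identified with a representing matrix in $SL(3,\mathbb R)$. For a bi-infinite sequence $(p_k)_{k\in\mathbb Z}$ in $\mathbb{RP}^2$, $T(p_k)=\overline{p_{k-1}p_{k+1}}\cap\overline{p_kp_{k+2}}$. A twisted $(N,1)$ pentagram spiral with monodromy $M$ is a bi-infinite sequence $(p_k)$ with $p_{N+k}=M\cdot T(p_{k-1})$ for all $k$, such that $p_{N+1}$ lies on the segment joining $p_N$ and $M\cdot p_1$; "generic" means all determinants and denominators appearing are nonzero. For vectors define $T(V_i)=(V_{i-1}\times V_{i+1})\times(V_i\times V_{i+2})$, $\overline T(V_i)=c_{i+1}(V_i\times V_{i+1})\times(V_{i-2}\times V_{i-1})$, $c_i=\det(V_{i+1},V_{i+2},V_{i+3})/\det(V_i,V_{i+1},V_{i+2})$. The normalized lift is the unique sequence $V_k$ with $[V_k]=p_k$, $V_{N+i}=MT(V_{i-1})$ and $V_{-i}=M^{-1}\overline T(V_{N-i+1})$ for $i\ge1$, and $\det(V_i,V_{i+1},V_{i+2})=1$ for $i=0,\dots,N$. Invariants: $V_{i+3}=a_iV_{i+2}+b_iV_{i+1}+c_iV_i$ (so $c_i=1$ for $0\le i\le N-1$); $A_i=c_i+a_ib_{i-1}$; $\rho_i=(V_i,V_{i+1},V_{i+2})$. *)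

theory Defs
  imports "HOL-Analysis.Analysis"
begin

definition det3 :: "real^3 \<Rightarrow> real^3 \<Rightarrow> real^3 \<Rightarrow> real" where
  "det3 u v w = det (vector [u, v, w] :: real^3^3)"

definition cinv :: "(int \<Rightarrow> real^3) \<Rightarrow> int \<Rightarrow> real" where
  "cinv V i = det3 (V (i+1)) (V (i+2)) (V (i+3)) / det3 (V i) (V (i+1)) (V (i+2))"

(* T(V_i) = (V_{i-1} x V_{i+1}) x (V_i x V_{i+2}) ; on representatives of points of RP^2
   this is a representative of the intersection of lines p_{i-1}p_{i+1} and p_i p_{i+2} *)
definition Tmap :: "(int \<Rightarrow> real^3) \<Rightarrow> int \<Rightarrow> real^3" where
  "Tmap V i = cross3 (cross3 (V (i-1)) (V (i+1))) (cross3 (V i) (V (i+2)))"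

definition Tbar :: "(int \<Rightarrow> real^3) \<Rightarrow> int \<Rightarrow> real^3" where
  "Tbar V i = cinv V (i+1) *\<^sub>R cross3 (cross3 (V i) (V (i+1))) (cross3 (V (i-2)) (V (i-1)))"

(* projective equality [u] = [v] of nonzero representatives *)
definition proj_eq :: "real^3 \<Rightarrow> real^3 \<Rightarrow> bool" where
  "proj_eq u v \<longleftrightarrow> u \<noteq> 0 \<and> v \<noteq> 0 \<and> (\<exists>l::real. l \<noteq> 0 \<and> u = l *\<^sub>R v)"

(* twisted (N,1) pentagram spiral with monodromy M; points given by nonzero representatives p k *)
definition twisted_spiral :: "int \<Rightarrow> real^3^3 \<Rightarrow> (int \<Rightarrow> real^3) \<Rightarrow> bool" where
  "twisted_spiral N M p \<longleftrightarrow>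
     det M = 1 \<and> (\<forall>k. p k \<noteq> 0) \<and>
     (\<forall>k. proj_eq (p (N + k)) (M *v Tmap p (k - 1))) \<and>
     det3 (p N) (p (N + 1)) (M *v p 1) = 0"

definition normalized_lift :: "int \<Rightarrow> real^3^3 \<Rightarrow> (int \<Rightarrow> real^3) \<Rightarrow> (int \<Rightarrow> real^3) \<Rightarrow> bool" where
  "normalized_lift N M p V \<longleftrightarrow>
     (\<forall>k. proj_eq (V k) (p k)) \<and>
     (\<forall>i\<ge>1. V (N + i) = M *v Tmap V (i - 1)) \<and>
     (\<forall>i\<ge>1. V (- i) = matrix_inv M *v Tbar V (N - i + 1)) \<and>
     (\<forall>i. 0 \<le> i \<and> i \<le> N \<longrightarrow> det3 (V i) (V (i+1)) (V (i+2)) = 1)"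

end

theory Submission
  imports Defs
begin

(* Write W_k = M V_k.  The normalized lift satisfies V_{N+k} = M T(V_{k-1})
   and W_{-k} = Tbar(V_{N-k+1}) for k >= 1.  For a sequence obeying the recurrence
   V_{i+3} = a_i V_{i+2} + b_i V_{i+1} + c_i V_i, both T and Tbar are explicit combinations
   of two neighbouring vectors.  Hence V_{N+1}, ..., V_{N+4} are M applied to explicit
   combinations of V_0, V_1, V_2, while W_{-1}, W_{-2} lie in the spans of {V_N, V_{N+1}}
   and {V_{N-1}, V_N}.  Taking 3x3 determinants yields det rho_{N+1}, det rho_{N+2},
   det rho_{-1} and a_{-1} det rho_{-1}.  The spiral condition (V_{N-1}, V_N are proportional
   to M T(V_{-2}), M T(V_{-1})) yields a_{N-1} = a_0 c_{-1} and a_N = a_1. *)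

section \<open>Algebra of the 3x3 determinant\<close>

lemma det3_expand: "det3 u v w =
  u$1 * v$2 * w$3 - u$1 * v$3 * w$2 - u$2 * v$1 * w$3 + u$2 * v$3 * w$1 + u$3 * v$1 * w$2 - u$3 * v$2 * w$1"
  unfolding det3_def by (simp add: det_3 algebra_simps)

lemma det3_add1: "det3 (x + y) v w = det3 x v w + det3 y v w" by (simp add: det3_expand algebra_simps)
lemma det3_add2: "det3 u (x + y) w = det3 u x w + det3 u y w" by (simp add: det3_expand algebra_simps)
lemma det3_add3: "det3 u v (x + y) = det3 u v x + det3 u v y" by (simp add: det3_expand algebra_simps)
lemma det3_diff1: "det3 (x - y) v w = det3 x v w - det3 y v w" by (simp add: det3_expand algebra_simps)
lemma det3_diff2: "det3 u (x - y) w = det3 u x w - det3 u y w" by (simp add: det3_expand algebra_simps)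
lemma det3_diff3: "det3 u v (x - y) = det3 u v x - det3 u v y" by (simp add: det3_expand algebra_simps)
lemma det3_scale1: "det3 (r *\<^sub>R x) v w = r * det3 x v w" by (simp add: det3_expand algebra_simps)
lemma det3_scale2: "det3 u (r *\<^sub>R x) w = r * det3 u x w" by (simp add: det3_expand algebra_simps)
lemma det3_scale3: "det3 u v (r *\<^sub>R x) = r * det3 u v x" by (simp add: det3_expand algebra_simps)
lemma det3_repeat: "det3 x x w = 0" "det3 x v x = 0" "det3 u x x = 0" by (simp_all add: det3_expand algebra_simps)

lemmas det3_linear = det3_add1 det3_add2 det3_add3 det3_diff1 det3_diff2 det3_diff3
  det3_scale1 det3_scale2 det3_scale3 det3_repeat

lemma det3_swap23: "det3 u w v = - det3 u v w" by (simp add: det3_expand algebra_simps)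
lemma det3_cycle: "det3 v w u = det3 u v w" by (simp add: det3_expand algebra_simps)
lemma det3_zero: "det3 0 v w = 0" by (simp add: det3_expand)

lemma det3_in_frame:
  "det3 (x1 *\<^sub>R u + x2 *\<^sub>R v + x3 *\<^sub>R w) (y1 *\<^sub>R u + y2 *\<^sub>R v + y3 *\<^sub>R w) (z1 *\<^sub>R u + z2 *\<^sub>R v + z3 *\<^sub>R w)
   = (x1*y2*z3 - x1*y3*z2 - x2*y1*z3 + x2*y3*z1 + x3*y1*z2 - x3*y2*z1) * det3 u v w"
  unfolding det3_expand by (simp add: algebra_simps)

lemma det3_matrix_mult: "det3 (M *v u) (M *v v) (M *v w) = det M * det3 u v w"
proof -
  have "(vector [M *v u, M *v v, M *v w] :: real^3^3) = vector [u, v, w] ** transpose M"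
    by (simp add: vec_eq_iff forall_3 matrix_matrix_mult_def matrix_vector_mult_def
        transpose_def vector_def sum_3 mult.commute)
  then show ?thesis unfolding det3_def by (simp add: det_mul mult.commute)
qed

lemma cross3_cross3_det3: "cross3 (cross3 x y) (cross3 u v) = det3 x y v *\<^sub>R u - det3 x y u *\<^sub>R v"
  unfolding det3_def by (rule cross_cross_det)

lemma det3_vanish_modulo_span:
  assumes u: "u = \<sigma> *\<^sub>R (x - z)" and z: "z = \<alpha> *\<^sub>R u + \<beta> *\<^sub>R v"
    and indep: "det3 u v w \<noteq> 0"
  shows "det3 u v x = 0"
proof -
  have "\<sigma> \<noteq> 0"
  proof
    assume "\<sigma> = 0"
    then have "u = 0" using u by simp
    then show False using indep by (simp add: det3_zero)
  qed
  moreover have "\<sigma> *\<^sub>R x = u + \<sigma> *\<^sub>R (\<alpha> *\<^sub>R u + \<beta> *\<^sub>R v)"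
    using u z by (simp add: algebra_simps)
  then have "det3 u v (\<sigma> *\<^sub>R x) = 0"
    by (simp add: det3_linear)
  ultimately show ?thesis by (simp add: det3_scale3)
qed

section \<open>Sequences satisfying a third-order linear recurrence\<close>

definition rho_det :: "(int \<Rightarrow> real^3) \<Rightarrow> int \<Rightarrow> real" where
  "rho_det V i = det3 (V i) (V (i+1)) (V (i+2))"

locale linear_recurrence =
  fixes V :: "int \<Rightarrow> real^3" and a b c :: "int \<Rightarrow> real"
  assumes recurrence: "\<And>i. V (i + 3) = a i *\<^sub>R V (i + 2) + b i *\<^sub>R V (i + 1) + c i *\<^sub>R V i"
begin

lemma recurrence_at:
  assumes "k + 1 = j1" "k + 2 = j2" "k + 3 = j"
  shows "V j = a k *\<^sub>R V j2 + b k *\<^sub>R V j1 + c k *\<^sub>R V k"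
  using recurrence assms by metis

lemma rho_det_step: "rho_det V (i+1) = c i * rho_det V i"
proof -
  have "rho_det V (i+1) = det3 (V (i+1)) (V (i+2)) (V (i+3))"
    unfolding rho_det_def by (simp add: add.assoc)
  also have "\<dots> = c i * det3 (V (i+1)) (V (i+2)) (V i)"
    by (simp add: recurrence det3_linear)
  finally show ?thesis unfolding rho_det_def by (simp add: det3_cycle)
qed

lemma cinv_eq: "rho_det V i \<noteq> 0 \<Longrightarrow> cinv V i = c i"
  using rho_det_step[of i] unfolding cinv_def rho_det_def by (simp add: add.assoc)

lemma det3_skip_one: "det3 (V i) (V (i+1)) (V (i+3)) = a i * rho_det V i"
  unfolding rho_det_def by (simp add: recurrence det3_linear)

lemma det3_skip_two: "det3 (V i) (V (i+2)) (V (i+3)) = - b i * rho_det V i"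
proof -
  have "det3 (V i) (V (i+2)) (V (i+3)) = b i * det3 (V i) (V (i+2)) (V (i+1))"
    by (simp add: recurrence det3_linear)
  then show ?thesis
    unfolding rho_det_def by (simp add: det3_swap23[of "V i" "V (i+2)" "V (i+1)"])
qed

lemma Tmap_recurrence:
  "Tmap V (i+1) = rho_det V i *\<^sub>R V (i+3) - (b i * rho_det V i) *\<^sub>R V (i+1)"
proof -
  have "Tmap V (i+1) = cross3 (cross3 (V i) (V (i+2))) (cross3 (V (i+1)) (V (i+3)))"
    unfolding Tmap_def by (simp add: add.commute)
  also have "\<dots> = det3 (V i) (V (i+2)) (V (i+3)) *\<^sub>R V (i+1) - det3 (V i) (V (i+2)) (V (i+1)) *\<^sub>R V (i+3)"
    by (rule cross3_cross3_det3)
  finally show ?thesis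
    using det3_skip_two[of i] det3_swap23[of "V i" "V (i+1)" "V (i+2)"]
    unfolding rho_det_def by (simp add: algebra_simps)
qed

lemma Tbar_recurrence:
  assumes "rho_det V (i+3) \<noteq> 0"
  shows "Tbar V (i+2) = (c (i+3) * rho_det V i) *\<^sub>R V (i+3) - (c (i+3) * a i * rho_det V i) *\<^sub>R V (i+2)"
proof -
  have "Tbar V (i+2) = c (i+3) *\<^sub>R cross3 (cross3 (V (i+2)) (V (i+3))) (cross3 (V i) (V (i+1)))"
    unfolding Tbar_def using cinv_eq[OF assms] by (simp add: add.commute)
  also have "cross3 (cross3 (V (i+2)) (V (i+3))) (cross3 (V i) (V (i+1)))
      = - cross3 (cross3 (V i) (V (i+1))) (cross3 (V (i+2)) (V (i+3)))"
    by (rule cross_skew)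
  also have "\<dots> = rho_det V i *\<^sub>R V (i+3) - det3 (V i) (V (i+1)) (V (i+3)) *\<^sub>R V (i+2)"
    unfolding cross3_cross3_det3 rho_det_def by (simp add: algebra_simps)
  finally show ?thesis using det3_skip_one[of i] by (simp add: algebra_simps)
qed

end

definition A_inv :: "(int \<Rightarrow> real) \<Rightarrow> (int \<Rightarrow> real) \<Rightarrow> (int \<Rightarrow> real) \<Rightarrow> int \<Rightarrow> real" where
  "A_inv a b c i = c i + a i * b (i - 1)"

section \<open>The normalized lift of a twisted spiral\<close>

lemma Tmap_rescale:
  assumes "\<And>k. V k = l k *\<^sub>R p k"
  shows "Tmap V i = (l (i-1) * l (i+1) * (l i * l (i+2))) *\<^sub>R Tmap p i"
  unfolding Tmap_def using assms by (simp add: cross_mult_left cross_mult_right)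

text \<open>The normalized lift V of a twisted spiral together with its recurrence coefficients.\<close>
locale normalized_spiral = linear_recurrence V a b c
  for N :: int and M :: "real^3^3" and p V :: "int \<Rightarrow> real^3" and a b c :: "int \<Rightarrow> real" +
  assumes N_ge_3: "N \<ge> 3"
    and spiral: "twisted_spiral N M p"
    and lift: "normalized_lift N M p V"
    and rho_det_nonzero: "\<And>i. rho_det V i \<noteq> 0"
begin

lemma det_M: "det M = 1"
  using spiral unfolding twisted_spiral_def by simp

lemma M_matrix_inv: "M *v (matrix_inv M *v x) = x"
proof -
  have "invertible M" using det_M by (simp add: invertible_det_nz)
  then have "M ** matrix_inv M = mat 1"
    unfolding invertible_def matrix_inv_def by (rule someI_ex[THEN conjunct1])
  then show ?thesis by (simp add: matrix_vector_mul_assoc)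
qed

lemma rho_det_normalized: "0 \<le> i \<Longrightarrow> i \<le> N \<Longrightarrow> rho_det V i = 1"
  using lift unfolding normalized_lift_def rho_det_def by blast

lemma c_normalized: "0 \<le> i \<Longrightarrow> i < N \<Longrightarrow> c i = 1"
  using rho_det_step[of i] rho_det_normalized[of i] rho_det_normalized[of "i+1"] by simp

text \<open>Since c_0 = c_1 = c_2 = 1, the first invariants A_i are 1 + a_i b_{i-1}.\<close>
lemma A_inv_low:
  "A_inv a b c 0 = 1 + a 0 * b (-1)" "A_inv a b c 1 = 1 + a 1 * b 0" "A_inv a b c 2 = 1 + a 2 * b 1"
  using c_normalized[of 0] c_normalized[of 1] c_normalized[of 2] N_ge_3
  by (simp_all add: A_inv_def)

lemma V_after: "1 \<le> i \<Longrightarrow> V (N + i) = M *v Tmap V (i - 1)"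
  using lift unfolding normalized_lift_def by blast

lemma M_V_before: "1 \<le> i \<Longrightarrow> M *v V (- i) = Tbar V (N - i + 1)"
  using lift M_matrix_inv unfolding normalized_lift_def by simp

text \<open>The spiral condition: V_{N+k} is proportional to M T(V_{k-1}) for every k, also for
  k \<le> 0, where the lift is not defined by this formula.\<close>
lemma V_proportional: "\<exists>s. V (N + k) = s *\<^sub>R (M *v Tmap V (k - 1))"
proof -
  obtain l where l: "\<And>k. l k \<noteq> 0 \<and> V k = l k *\<^sub>R p k"
    using lift unfolding normalized_lift_def proj_eq_def by metis
  obtain m where m: "p (N + k) = m *\<^sub>R (M *v Tmap p (k - 1))"
    using spiral unfolding twisted_spiral_def proj_eq_def by blast
  define q where "q = l (k-2) * l k * (l (k-1) * l (k+1))"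
  have "q \<noteq> 0" using l unfolding q_def by simp
  have "Tmap V (k-1) = q *\<^sub>R Tmap p (k-1)"
    using Tmap_rescale[of V l p "k-1"] l unfolding q_def by (simp add: algebra_simps)
  then have "V (N + k) = (l (N + k) * m / q) *\<^sub>R (M *v Tmap V (k - 1))"
    using l[of "N+k"] m \<open>q \<noteq> 0\<close> by (simp add: matrix_vector_mult_scaleR)
  then show ?thesis by blast
qed

lemma c_minus_1: "c (-1) * rho_det V (-1) = 1"
  using rho_det_step[of "-1"] rho_det_normalized[of 0] N_ge_3 by simp

lemma V_after_N:
  defines "r \<equiv> rho_det V (-1)"
  shows "V (N+1) = M *v ((- (b (-1) * r)) *\<^sub>R V 0 + 0 *\<^sub>R V 1 + r *\<^sub>R V 2)"
    and "V (N+2) = M *v (1 *\<^sub>R V 0 + 0 *\<^sub>R V 1 + a 0 *\<^sub>R V 2)"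
    and "V (N+3) = M *v (a 1 *\<^sub>R V 0 + (a 1 * b 0 + 1) *\<^sub>R V 1 + (a 1 * a 0) *\<^sub>R V 2)"
    and "V (N+4) = M *v ((a 2 * a 1) *\<^sub>R V 0 + (a 2 * (a 1 * b 0 + 1)) *\<^sub>R V 1
                          + (a 2 * (a 1 * a 0 + b 1) + 1) *\<^sub>R V 2)"
proof -
  have rho: "rho_det V 0 = 1" "rho_det V 1 = 1" "rho_det V 2 = 1"
    using N_ge_3 by (simp_all add: rho_det_normalized)
  have V3: "V 3 = a 0 *\<^sub>R V 2 + b 0 *\<^sub>R V 1 + V 0"
    using recurrence_at[of 0 1 2 3] c_normalized[of 0] N_ge_3 by simp
  have V4: "V 4 = a 1 *\<^sub>R V 3 + b 1 *\<^sub>R V 2 + V 1"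
    using recurrence_at[of 1 2 3 4] c_normalized[of 1] N_ge_3 by simp
  have V5: "V 5 = a 2 *\<^sub>R V 4 + b 2 *\<^sub>R V 3 + V 2"
    using recurrence_at[of 2 3 4 5] c_normalized[of 2] N_ge_3 by simp
  have after: "V (N+1) = M *v Tmap V 0" "V (N+2) = M *v Tmap V 1"
      "V (N+3) = M *v Tmap V 2" "V (N+4) = M *v Tmap V 3"
    using V_after[of 1] V_after[of 2] V_after[of 3] V_after[of 4] by simp_all
  have Tm: "Tmap V 0 = r *\<^sub>R V 2 - (b (-1) * r) *\<^sub>R V 0" "Tmap V 1 = V 3 - b 0 *\<^sub>R V 1"
      "Tmap V 2 = V 4 - b 1 *\<^sub>R V 2" "Tmap V 3 = V 5 - b 2 *\<^sub>R V 3"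
    using Tmap_recurrence[of "-1"] Tmap_recurrence[of 0] Tmap_recurrence[of 1]
      Tmap_recurrence[of 2] rho unfolding r_def by simp_all
  show "V (N+1) = M *v ((- (b (-1) * r)) *\<^sub>R V 0 + 0 *\<^sub>R V 1 + r *\<^sub>R V 2)"
    unfolding after Tm by (simp add: algebra_simps)
  show "V (N+2) = M *v (1 *\<^sub>R V 0 + 0 *\<^sub>R V 1 + a 0 *\<^sub>R V 2)"
    unfolding after Tm V3 by (simp add: algebra_simps)
  show "V (N+3) = M *v (a 1 *\<^sub>R V 0 + (a 1 * b 0 + 1) *\<^sub>R V 1 + (a 1 * a 0) *\<^sub>R V 2)"
    unfolding after Tm V4 V3 by (simp add: algebra_simps)
  show "V (N+4) = M *v ((a 2 * a 1) *\<^sub>R V 0 + (a 2 * (a 1 * b 0 + 1)) *\<^sub>R V 1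
                          + (a 2 * (a 1 * a 0 + b 1) + 1) *\<^sub>R V 2)"
    unfolding after Tm V5 V4 V3 by (simp add: algebra_simps)
qed

lemma rho_det_N_plus_1: "rho_det V (N+1) = rho_det V (-1) * A_inv a b c 0 * A_inv a b c 1"
proof -
  have "rho_det V (N+1) = det3 (V (N+1)) (V (N+2)) (V (N+3))"
    unfolding rho_det_def by (simp add: add.assoc)
  also have "\<dots> = rho_det V (-1) * (1 + a 0 * b (-1)) * (1 + a 1 * b 0)"
    unfolding V_after_N det3_matrix_mult det_M det3_in_frame
    using rho_det_normalized[of 0] N_ge_3 unfolding rho_det_def by (simp add: algebra_simps)
  finally show ?thesis by (simp add: A_inv_low)
qed

lemma rho_det_N_plus_2: "rho_det V (N+2) = A_inv a b c 1 * A_inv a b c 2"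
proof -
  have "rho_det V (N+2) = det3 (V (N+2)) (V (N+3)) (V (N+4))"
    unfolding rho_det_def by (simp add: add.assoc)
  also have "\<dots> = (1 + a 1 * b 0) * (1 + a 2 * b 1)"
    unfolding V_after_N det3_matrix_mult det_M det3_in_frame
    using rho_det_normalized[of 0] N_ge_3 unfolding rho_det_def by (simp add: algebra_simps)
  finally show ?thesis by (simp add: A_inv_low)
qed

lemma M_V_minus_1: "M *v V (-1) = c (N+1) *\<^sub>R V (N+1) - (c (N+1) * a (N-2)) *\<^sub>R V N"
  using M_V_before[of 1] Tbar_recurrence[of "N-2", OF rho_det_nonzero]
    rho_det_normalized[of "N-2"] N_ge_3 by (simp add: add.commute)

lemma M_V_minus_2: "\<exists>\<alpha> \<beta>. M *v V (-2) = \<alpha> *\<^sub>R V N + \<beta> *\<^sub>R V (N-1)"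
proof -
  have "M *v V (-2) = (c N * rho_det V (N-3)) *\<^sub>R V N - (c N * a (N-3) * rho_det V (N-3)) *\<^sub>R V (N-1)"
    using M_V_before[of 2] Tbar_recurrence[of "N-3", OF rho_det_nonzero] by simp
  then show ?thesis by (metis scaleR_minus_left diff_conv_add_uminus)
qed

lemma M_V_0: "A_inv a b c 0 *\<^sub>R (M *v V 0) = V (N+2) - (a 0 * c (-1)) *\<^sub>R V (N+1)"
proof -
  have "V (N+2) - (a 0 * c (-1)) *\<^sub>R V (N+1)
      = M *v ((1 + a 0 * b (-1) * (c (-1) * rho_det V (-1))) *\<^sub>R V 0
              + (a 0 - a 0 * (c (-1) * rho_det V (-1))) *\<^sub>R V 2)"
    unfolding V_after_N by (simp add: algebra_simps)
  also have "\<dots> = A_inv a b c 0 *\<^sub>R (M *v V 0)"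
    using c_minus_1 by (simp add: A_inv_low matrix_vector_mult_scaleR)
  finally show ?thesis by simp
qed

lemma M_V_1: "A_inv a b c 1 *\<^sub>R (M *v V 1) = V (N+3) - a 1 *\<^sub>R V (N+2)"
  unfolding V_after_N A_inv_low by (simp add: algebra_simps)

lemma M_V_2: "a 0 *\<^sub>R (M *v V 2) = V (N+2) - M *v V 0"
  unfolding V_after_N by (simp add: algebra_simps)

lemma frame_N_minus_1: "det3 (V (N-1)) (V N) (V (N+1)) = 1"
  using rho_det_normalized[of "N-1"] N_ge_3 unfolding rho_det_def by (simp add: add.commute)

lemma frame_N: "det3 (V N) (V (N+1)) (V (N+2)) = 1"
  using rho_det_normalized[of N] N_ge_3 unfolding rho_det_def by simp

text \<open>The spiral condition at k = -1: V_{N-1} \<sim> M T(V_{-2}) lies in the span of W_0 and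
  W_{-2}, hence W_0 lies in the plane of V_{N-1}, V_N; this forces a_{N-1} = a_0 c_{-1}.\<close>
lemma a_N_minus_1: "a (N-1) = a 0 * c (-1)"
proof -
  obtain s where s: "V (N-1) = s *\<^sub>R (M *v Tmap V (-2))"
    using V_proportional[of "-1"] by auto
  obtain \<alpha> \<beta> where ab: "M *v V (-2) = \<alpha> *\<^sub>R V N + \<beta> *\<^sub>R V (N-1)"
    using M_V_minus_2 by blast
  have u: "V (N-1) = (s * rho_det V (-3)) *\<^sub>R (M *v V 0 - b (-3) *\<^sub>R (M *v V (-2)))"
  proof -
    have Tm: "Tmap V (-2) = rho_det V (-3) *\<^sub>R V 0 - (b (-3) * rho_det V (-3)) *\<^sub>R V (-2)"
      using Tmap_recurrence[of "-3"] by simp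
    show ?thesis unfolding s Tm by (simp add: algebra_simps)
  qed
  have z: "b (-3) *\<^sub>R (M *v V (-2)) = (b (-3) * \<beta>) *\<^sub>R V (N-1) + (b (-3) * \<alpha>) *\<^sub>R V N"
    unfolding ab by (simp add: algebra_simps)
  have "det3 (V (N-1)) (V N) (M *v V 0) = 0"
    by (rule det3_vanish_modulo_span[where w = "V (N+1)", OF u z]) (simp add: frame_N_minus_1)
  then have "0 = det3 (V (N-1)) (V N) (A_inv a b c 0 *\<^sub>R (M *v V 0))"
    by (simp add: det3_scale3)
  also have "\<dots> = det3 (V (N-1)) (V N) (V (N+2)) - a 0 * c (-1)"
    unfolding M_V_0 by (simp add: det3_linear frame_N_minus_1)
  also have "det3 (V (N-1)) (V N) (V (N+2)) = a (N-1)"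
    using det3_skip_one[of "N-1"] rho_det_normalized[of "N-1"] N_ge_3 by (simp add: add.commute)
  finally show ?thesis by simp
qed

text \<open>The spiral condition at k = 0 gives in the same way a_N = a_1.\<close>
lemma a_N: "a N = a 1"
proof -
  obtain s where s: "V N = s *\<^sub>R (M *v Tmap V (-1))"
    using V_proportional[of 0] by auto
  have u: "V N = (s * rho_det V (-2)) *\<^sub>R (M *v V 1 - b (-2) *\<^sub>R (M *v V (-1)))"
  proof -
    have Tm: "Tmap V (-1) = rho_det V (-2) *\<^sub>R V 1 - (b (-2) * rho_det V (-2)) *\<^sub>R V (-1)"
      using Tmap_recurrence[of "-2"] by simp
    show ?thesis unfolding s Tm by (simp add: algebra_simps)
  qed
  have z: "b (-2) *\<^sub>R (M *v V (-1))
      = (- (b (-2) * c (N+1) * a (N-2))) *\<^sub>R V N + (b (-2) * c (N+1)) *\<^sub>R V (N+1)"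
    unfolding M_V_minus_1 by (simp add: algebra_simps)
  have "det3 (V N) (V (N+1)) (M *v V 1) = 0"
    by (rule det3_vanish_modulo_span[where w = "V (N+2)", OF u z]) (simp add: frame_N)
  then have "0 = det3 (V N) (V (N+1)) (A_inv a b c 1 *\<^sub>R (M *v V 1))"
    by (simp add: det3_scale3)
  also have "\<dots> = a N - a 1"
    unfolding M_V_1 using det3_skip_one[of N] frame_N rho_det_normalized[of N] N_ge_3
    by (simp add: det3_linear)
  finally show ?thesis by simp
qed

lemma M_V_in_frame:
  "M *v V (-1) = (- (c (N+1) * a (N-2))) *\<^sub>R V N + c (N+1) *\<^sub>R V (N+1) + 0 *\<^sub>R V (N+2)"
  "A_inv a b c 0 *\<^sub>R (M *v V 0) = 0 *\<^sub>R V N + (- (a 0 * c (-1))) *\<^sub>R V (N+1) + 1 *\<^sub>R V (N+2)"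
  "A_inv a b c 1 *\<^sub>R (M *v V 1) = c N *\<^sub>R V N + b N *\<^sub>R V (N+1) + 0 *\<^sub>R V (N+2)"
  "a 0 *\<^sub>R (A_inv a b c 0 *\<^sub>R (M *v V 2))
     = 0 *\<^sub>R V N + (a 0 * c (-1)) *\<^sub>R V (N+1) + (A_inv a b c 0 - 1) *\<^sub>R V (N+2)"
proof -
  show "M *v V (-1) = (- (c (N+1) * a (N-2))) *\<^sub>R V N + c (N+1) *\<^sub>R V (N+1) + 0 *\<^sub>R V (N+2)"
    using M_V_minus_1 by (simp add: algebra_simps)
  show "A_inv a b c 0 *\<^sub>R (M *v V 0) = 0 *\<^sub>R V N + (- (a 0 * c (-1))) *\<^sub>R V (N+1) + 1 *\<^sub>R V (N+2)"
    using M_V_0 by (simp add: algebra_simps)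
  show "A_inv a b c 1 *\<^sub>R (M *v V 1) = c N *\<^sub>R V N + b N *\<^sub>R V (N+1) + 0 *\<^sub>R V (N+2)"
    using M_V_1 recurrence_at[of N "N+1" "N+2" "N+3"] a_N by simp
  have "a 0 *\<^sub>R (A_inv a b c 0 *\<^sub>R (M *v V 2)) = A_inv a b c 0 *\<^sub>R (V (N+2) - M *v V 0)"
    using M_V_2 by (metis scaleR_left_commute)
  also have "\<dots> = A_inv a b c 0 *\<^sub>R V (N+2) - A_inv a b c 0 *\<^sub>R (M *v V 0)"
    by (simp add: scaleR_right_diff_distrib)
  finally show "a 0 *\<^sub>R (A_inv a b c 0 *\<^sub>R (M *v V 2))
     = 0 *\<^sub>R V N + (a 0 * c (-1)) *\<^sub>R V (N+1) + (A_inv a b c 0 - 1) *\<^sub>R V (N+2)"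
    unfolding M_V_0 by (simp add: algebra_simps)
qed

text \<open>det rho_{-1} = det(W_{-1}, W_0, W_1), computed in the frame after index N.\<close>
lemma rho_det_minus_1:
  "A_inv a b c 0 * A_inv a b c 1 * rho_det V (-1) = c (N+1) * (c N + b N * a (N-2))"
proof -
  have "A_inv a b c 0 * A_inv a b c 1 * rho_det V (-1)
      = det3 (M *v V (-1)) (A_inv a b c 0 *\<^sub>R (M *v V 0)) (A_inv a b c 1 *\<^sub>R (M *v V 1))"
    by (simp add: rho_det_def det3_matrix_mult det_M det3_scale2 det3_scale3)
  also have "\<dots> = c (N+1) * (c N + b N * a (N-2))"
    unfolding M_V_in_frame det3_in_frame frame_N by (simp add: algebra_simps)
  finally show ?thesis .
qed

text \<open>a_{-1} det rho_{-1} = det(W_{-1}, W_0, W_2), computed in the same frame.\<close>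
lemma a_minus_1:
  assumes "a 0 \<noteq> 0" "A_inv a b c 0 \<noteq> 0"
  shows "A_inv a b c 0 * a (-1) * rho_det V (-1) = c (N+1) * a (N-2) * c (-1)"
proof -
  have "a 0 * A_inv a b c 0 * (A_inv a b c 0 * a (-1) * rho_det V (-1))
      = det3 (M *v V (-1)) (A_inv a b c 0 *\<^sub>R (M *v V 0)) (a 0 *\<^sub>R (A_inv a b c 0 *\<^sub>R (M *v V 2)))"
    using det3_skip_one[of "-1"]
    by (simp add: rho_det_def det3_matrix_mult det_M det3_scale2 det3_scale3)
  also have "\<dots> = a 0 * A_inv a b c 0 * (c (N+1) * a (N-2) * c (-1))"
    unfolding M_V_in_frame det3_in_frame frame_N by (simp add: algebra_simps)
  finally show ?thesis using assms by simp
qed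

text \<open>Since det rho_N = 1, the invariant c_N is det rho_{N+1}, and c_{N+1} c_N = det rho_{N+2}.\<close>
lemma c_N: "c N = rho_det V (N+1)"
  using rho_det_step[of N] rho_det_normalized[of N] N_ge_3 by simp

lemma c_N_plus_1: "c (N+1) * c N = A_inv a b c 1 * A_inv a b c 2"
  using rho_det_step[of "N+1"] rho_det_N_plus_2 c_N by (simp add: add.assoc)

lemma part_i:
  assumes "a 0 \<noteq> 0" "A_inv a b c 1 \<noteq> 0"
  shows "c N = det3 (V (N+1)) (V (N+2)) (V (N+3))"
    and "c N * c (-1) = A_inv a b c 0 * A_inv a b c 1"
    and "A_inv a b c 0 = a (N-1) * c N / (A_inv a b c 1 * a 0)"
    and "b (-1) = (1 / a 0) * (a (N-1) * c N / (A_inv a b c 1 * a 0) - 1)"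
proof -
  show "c N = det3 (V (N+1)) (V (N+2)) (V (N+3))"
    unfolding c_N rho_det_def by (simp add: add.assoc)
  show cc: "c N * c (-1) = A_inv a b c 0 * A_inv a b c 1"
    using c_N rho_det_N_plus_1 c_minus_1 by (simp add: algebra_simps)
  show A0: "A_inv a b c 0 = a (N-1) * c N / (A_inv a b c 1 * a 0)"
    using cc a_N_minus_1 assms by (simp add: field_simps)
  have "1 + a 0 * b (-1) = a (N-1) * c N / (A_inv a b c 1 * a 0)"
    using A0 A_inv_low(1) by simp
  then show "b (-1) = (1 / a 0) * (a (N-1) * c N / (A_inv a b c 1 * a 0) - 1)"
    using assms by (simp add: field_simps)
qed

lemma part_ii:
  assumes "a (N-2) \<noteq> 0" "c N \<noteq> 0" "A_inv a b c 1 \<noteq> 0" "A_inv a b c 2 \<noteq> 0"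
  shows "c (N+1) * (c N + b N * a (N-2)) = c N"
    and "c N + b N * a (N-2) = (c N)^2 / (A_inv a b c 1 * A_inv a b c 2)"
    and "b N = c N / a (N-2) * (c N / (A_inv a b c 1 * A_inv a b c 2) - 1)"
    and "c (N+1) = A_inv a b c 1 * A_inv a b c 2 / c N"
proof -
  show prod: "c (N+1) * (c N + b N * a (N-2)) = c N"
    using rho_det_minus_1 c_N rho_det_N_plus_1 by (simp add: algebra_simps)
  show cN1: "c (N+1) = A_inv a b c 1 * A_inv a b c 2 / c N"
    using c_N_plus_1 assms by (simp add: field_simps)
  show sum: "c N + b N * a (N-2) = (c N)^2 / (A_inv a b c 1 * A_inv a b c 2)"
    using prod assms unfolding cN1 by (simp add: field_simps power2_eq_square)
  show "b N = c N / a (N-2) * (c N / (A_inv a b c 1 * A_inv a b c 2) - 1)"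
    using sum assms by (simp add: field_simps power2_eq_square)
qed

lemma part_iii:
  assumes "a 0 \<noteq> 0" "c N \<noteq> 0" "A_inv a b c 0 \<noteq> 0"
  shows "a (-1) = c (N+1) * a (N-1) * a (N-2) / (c N * a 0) * (1 + a 1 * b 0)"
    and "c (N+1) * a (N-1) * a (N-2) / (c N * a 0) * (1 + a 1 * b 0)
           = (a (N-1))^2 * a (N-2) * A_inv a b c 1 * A_inv a b c 2 / ((a 0)^2 * c N * A_inv a b c 0)"
proof -
  have r: "rho_det V (-1) \<noteq> 0" by (rule rho_det_nonzero)
  have cN: "c N = rho_det V (-1) * A_inv a b c 0 * A_inv a b c 1"
    using c_N rho_det_N_plus_1 by simp
  have A1: "A_inv a b c 1 \<noteq> 0" using cN assms by auto
  have am1: "a (-1) = c (N+1) * a (N-2) * c (-1) / (A_inv a b c 0 * rho_det V (-1))"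
    using a_minus_1 assms r by (simp add: field_simps)
  show "a (-1) = c (N+1) * a (N-1) * a (N-2) / (c N * a 0) * (1 + a 1 * b 0)"
    unfolding am1 A_inv_low(2)[symmetric] a_N_minus_1 cN using assms r A1 by (simp add: field_simps)
  show "c (N+1) * a (N-1) * a (N-2) / (c N * a 0) * (1 + a 1 * b 0)
      = (a (N-1))^2 * a (N-2) * A_inv a b c 1 * A_inv a b c 2 / ((a 0)^2 * c N * A_inv a b c 0)"
  proof -
    have cm1: "c (-1) = 1 / rho_det V (-1)"
      using c_minus_1 r by (simp add: field_simps)
    show ?thesis
      using c_N_plus_1 assms r A1 unfolding A_inv_low(2)[symmetric] a_N_minus_1 cN cm1
      by (simp add: field_simps power2_eq_square)
  qed
qed

end

theorem mainTheorem10: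
  fixes N :: int and M :: "real^3^3" and p V :: "int \<Rightarrow> real^3"
    and a b c A :: "int \<Rightarrow> real"
  assumes hN: "N \<ge> 5" and hmod: "N mod 3 \<noteq> 1"
    and spiral: "twisted_spiral N M p"
    and lift: "normalized_lift N M p V"
    and rec: "\<forall>i. V (i + 3) = a i *\<^sub>R V (i + 2) + b i *\<^sub>R V (i + 1) + c i *\<^sub>R V i"
    and hA: "\<forall>i. A i = c i + a i * b (i - 1)"
    and gen_det: "\<forall>i. det3 (V i) (V (i+1)) (V (i+2)) \<noteq> 0"
    and gen_T: "\<forall>i. Tmap p i \<noteq> 0 \<and> Tmap V i \<noteq> 0"
    and gen_den: "a 0 \<noteq> 0" "a (N - 2) \<noteq> 0" "c N \<noteq> 0" "A 0 \<noteq> 0" "A 1 \<noteq> 0" "A 2 \<noteq> 0"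
  shows "(c N = det3 (V (N+1)) (V (N+2)) (V (N+3)) \<and>
          c N * c (-1) = A 0 * A 1 \<and>
          A 0 = a (N - 1) * c N / (A 1 * a 0) \<and>
          b (-1) = (1 / a 0) * (a (N - 1) * c N / (A 1 * a 0) - 1))
       \<and> (c (N+1) * (c N + b N * a (N - 2)) = c N \<and>
          c N + b N * a (N - 2) = (c N)^2 / (A 1 * A 2) \<and>
          b N = c N / a (N - 2) * (c N / (A 1 * A 2) - 1) \<and>
          c (N+1) = A 1 * A 2 / c N)
       \<and> (a (-1) = c (N+1) * a (N - 1) * a (N - 2) / (c N * a 0) * (1 + a 1 * b 0) \<and>
          c (N+1) * a (N - 1) * a (N - 2) / (c N * a 0) * (1 + a 1 * b 0)
            = (a (N - 1))^2 * a (N - 2) * A 1 * A 2 / ((a 0)^2 * c N * A 0))"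
proof -
  interpret normalized_spiral N M p V a b c
  proof
    show "V (i + 3) = a i *\<^sub>R V (i + 2) + b i *\<^sub>R V (i + 1) + c i *\<^sub>R V i" for i
      using rec by blast
    show "rho_det V i \<noteq> 0" for i
      using gen_det unfolding rho_det_def by blast
  qed (use hN spiral lift in auto)
  have A: "A = A_inv a b c"
    using hA by (auto simp: A_inv_def)
  have A_nonzero: "A_inv a b c 0 \<noteq> 0" "A_inv a b c 1 \<noteq> 0" "A_inv a b c 2 \<noteq> 0"
    using gen_den(4-6) unfolding A .
  show ?thesis
    unfolding A using part_i[OF gen_den(1) A_nonzero(2)]
      part_ii[OF gen_den(2,3) A_nonzero(2,3)] part_iii[OF gen_den(1,3) A_nonzero(1)]
    by blast
qed

end
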